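(* Let $A$ be a payoff Conway game. (1) Every winning strategy on $A$ plays only plays that are well-parenthesized for Player. (2) For every winning strategy $\sigma$ on $A$ and every winning strategy $\tau$ on $A^*\otimes\mathnormal{2}$, every play of the interaction $\sigma\Join\tau$ is well-parenthesized (for both Player and Opponent).
   Context: A Conway game $A=(V_A,E_A,\lambda_A)$ is a rooted directed graph with root $\star_A$ and polarity $\lambda_A:E_A\to\{-1,+1\}$ ($-1$ Opponent, $+1$ Player). Paths $s:x\twoheadrightarrow y$ are finite sequences of consecutive moves; $\epsilon_x$ is the empty path; $s;t$ concatenation; plays are paths from the root; alternating means consecutive moves have opposite polarities. A strategy on $A$ is a set of alternating even-length plays containing the empty play, whose nonempty plays start with Opponent, closed under even-length prefixes, and deterministic. A payoff Conway game has $\kappa_A=(\kappa_A^+,\kappa_A^-):\mathrm{Path}_A\to\mathbb{N}\times\mathbb{N}$ with: $\lambda_A(m)=-1\Rightarrow\kappa_A^+(m)=0$, $\lambda_A(m)=+1\Rightarrow\kappa_A^-(m)=0$; $\kappa_A(t)\le\kappa_A(s;t)$; $\kappa_A(s;t)\le\kappa_A(s)+\kappa_A(t)$; $\kappa_A(\epsilon_x)=(0,0)$. The dual $A^*$ reverses polarities and swaps $\kappa^+,\kappa^-$; the tensor $A\otimes B$ is the product graph with moves of either component, polarities inherited, and $\kappa_{A\otimes B}(s)=\kappa_A(s_{|A})+\kappa_B(s_{|B})$. A strategy plays a path $t:x\twoheadrightarrow y$ if some play $s:\star\twoheadrightarrow x$ in it has $s;t$ in it; it is winning if every path $s$ it plays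 satisfies $\kappa^+(s)=0\Rightarrow\kappa^-(s)=0$. A play $s$ is well-parenthesized for Player if every even-length path $t$ occurring in $s$ (as a segment) and ending with a Player move satisfies $\kappa_A^+(t)=0\Rightarrow\kappa_A^-(t)=0$; well-parenthesized for Opponent if every even-length path $t$ in $s$ ending with an Opponent move satisfies $\kappa_A^-(t)=0\Rightarrow\kappa_A^+(t)=0$; well-parenthesized if both. $\mathnormal{2}$ is the payoff game with graph $\bullet\xrightarrow{o}\bullet$: a single Opponent move $o$ with payoff $(0,0)$ (all its paths have payoff $(0,0)$). For $\sigma$ on $A$ and $\tau$ on $A^*\otimes\mathnormal{2}$, the interaction is $\sigma\Join\tau=\{\epsilon\}\cup\{s\cdot m\mid s\cdot m\in\sigma\text{ and } o\cdot s\in\tau\}$, where $s$ is a play and $m$ a move. *)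

theory Defs
  imports Main
begin

text \<open>A Conway game: a rooted directed multigraph (vertices of type 'v, moves of
type 'm with source and target), a polarity (-1 Opponent, +1 Player) on moves,
and a payoff function on paths.  Paths are represented by their list of moves;
the empty path is the empty list (its payoff is (0,0) in any case).\<close>

record ('v, 'm) game =
  verts :: "'v set"
  moves :: "'m set"
  src   :: "'m \<Rightarrow> 'v"
  tgt   :: "'m \<Rightarrow> 'v"
  root  :: "'v"
  pol   :: "'m \<Rightarrow> int"
  kappa :: "'m list \<Rightarrow> nat \<times> nat"

abbreviation kappa_plus :: "('v, 'm) game \<Rightarrow> 'm list \<Rightarrow> nat" where
  "kappa_plus A s \<equiv> fst (kappa A s)"

abbreviation kappa_minus :: "('v, 'm) game \<Rightarrow> 'm list \<Rightarrow> nat" where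
  "kappa_minus A s \<equiv> snd (kappa A s)"

definition le2 :: "nat \<times> nat \<Rightarrow> nat \<times> nat \<Rightarrow> bool" where
  "le2 p q \<longleftrightarrow> fst p \<le> fst q \<and> snd p \<le> snd q"

definition add2 :: "nat \<times> nat \<Rightarrow> nat \<times> nat \<Rightarrow> nat \<times> nat" where
  "add2 p q = (fst p + fst q, snd p + snd q)"

fun chain :: "('v, 'm) game \<Rightarrow> 'm list \<Rightarrow> bool" where
  "chain A [] = True"
| "chain A [m] = (m \<in> moves A)"
| "chain A (m # n # s) = (m \<in> moves A \<and> tgt A m = src A n \<and> chain A (n # s))"

definition is_path :: "('v, 'm) game \<Rightarrow> 'v \<Rightarrow> 'v \<Rightarrow> 'm list \<Rightarrow> bool" where
  "is_path A x y s \<longleftrightarrow> x \<in> verts A \<and> y \<in> verts A \<and> chain A s \<and>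
     (s = [] \<longrightarrow> x = y) \<and> (s \<noteq> [] \<longrightarrow> src A (hd s) = x \<and> tgt A (last s) = y)"

definition is_play :: "('v, 'm) game \<Rightarrow> 'm list \<Rightarrow> bool" where
  "is_play A s \<longleftrightarrow> (\<exists>y. is_path A (root A) y s)"

definition alternating :: "('v, 'm) game \<Rightarrow> 'm list \<Rightarrow> bool" where
  "alternating A s \<longleftrightarrow> (\<forall>i. Suc i < length s \<longrightarrow> pol A (s ! Suc i) = - pol A (s ! i))"

definition conway_game :: "('v, 'm) game \<Rightarrow> bool" where
  "conway_game A \<longleftrightarrow> root A \<in> verts A \<and>
     (\<forall>m\<in>moves A. src A m \<in> verts A \<and> tgt A m \<in> verts A \<and> pol A m \<in> {-1, 1})"

definition payoff_game :: "('v, 'm) game \<Rightarrow> bool" where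
  "payoff_game A \<longleftrightarrow> conway_game A \<and>
     (\<forall>m\<in>moves A. pol A m = -1 \<longrightarrow> kappa_plus A [m] = 0) \<and>
     (\<forall>m\<in>moves A. pol A m = 1 \<longrightarrow> kappa_minus A [m] = 0) \<and>
     (\<forall>x y z s t. is_path A x y s \<longrightarrow> is_path A y z t \<longrightarrow>
        le2 (kappa A t) (kappa A (s @ t))) \<and>
     (\<forall>x y z s t. is_path A x y s \<longrightarrow> is_path A y z t \<longrightarrow>
        le2 (kappa A (s @ t)) (add2 (kappa A s) (kappa A t))) \<and>
     kappa A [] = (0, 0)"

definition strategy :: "('v, 'm) game \<Rightarrow> 'm list set \<Rightarrow> bool" where
  "strategy A \<sigma> \<longleftrightarrow>
     [] \<in> \<sigma> \<and>
     (\<forall>s\<in>\<sigma>. is_play A s \<and> alternating A s \<and> even (length s)) \<and>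
     (\<forall>s\<in>\<sigma>. s \<noteq> [] \<longrightarrow> pol A (hd s) = -1) \<and>
     (\<forall>s\<in>\<sigma>. \<forall>k. even k \<longrightarrow> k \<le> length s \<longrightarrow> take k s \<in> \<sigma>) \<and>
     (\<forall>s m n n'. s @ [m, n] \<in> \<sigma> \<longrightarrow> s @ [m, n'] \<in> \<sigma> \<longrightarrow> n = n')"

definition plays_path :: "('v, 'm) game \<Rightarrow> 'm list set \<Rightarrow> 'm list \<Rightarrow> bool" where
  "plays_path A \<sigma> t \<longleftrightarrow> (\<exists>x y s. is_path A x y t \<and> is_path A (root A) x s \<and>
      s \<in> \<sigma> \<and> s @ t \<in> \<sigma>)"

definition winning :: "('v, 'm) game \<Rightarrow> 'm list set \<Rightarrow> bool" where
  "winning A \<sigma> \<longleftrightarrow> strategy A \<sigma> \<and>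
     (\<forall>t. plays_path A \<sigma> t \<longrightarrow> kappa_plus A t = 0 \<longrightarrow> kappa_minus A t = 0)"

definition wp_player :: "('v, 'm) game \<Rightarrow> 'm list \<Rightarrow> bool" where
  "wp_player A s \<longleftrightarrow> (\<forall>u t v x y. s = u @ t @ v \<longrightarrow> is_path A x y t \<longrightarrow>
      even (length t) \<longrightarrow> t \<noteq> [] \<longrightarrow> pol A (last t) = 1 \<longrightarrow>
      kappa_plus A t = 0 \<longrightarrow> kappa_minus A t = 0)"

definition wp_opponent :: "('v, 'm) game \<Rightarrow> 'm list \<Rightarrow> bool" where
  "wp_opponent A s \<longleftrightarrow> (\<forall>u t v x y. s = u @ t @ v \<longrightarrow> is_path A x y t \<longrightarrow>
      even (length t) \<longrightarrow> t \<noteq> [] \<longrightarrow> pol A (last t) = -1 \<longrightarrow>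
      kappa_minus A t = 0 \<longrightarrow> kappa_plus A t = 0)"

definition well_parenthesized :: "('v, 'm) game \<Rightarrow> 'm list \<Rightarrow> bool" where
  "well_parenthesized A s \<longleftrightarrow> wp_player A s \<and> wp_opponent A s"

definition dual :: "('v, 'm) game \<Rightarrow> ('v, 'm) game" where
  "dual A = A\<lparr> pol := (\<lambda>m. - pol A m),
              kappa := (\<lambda>s. (kappa_minus A s, kappa_plus A s)) \<rparr>"

fun projL :: "(('ma \<times> 'vb) + ('mb \<times> 'va)) list \<Rightarrow> 'ma list" where
  "projL [] = []"
| "projL (Inl (m, y) # s) = m # projL s"
| "projL (Inr _ # s) = projL s"

fun projR :: "(('ma \<times> 'vb) + ('mb \<times> 'va)) list \<Rightarrow> 'mb list" where
  "projR [] = []"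
| "projR (Inl _ # s) = projR s"
| "projR (Inr (n, x) # s) = n # projR s"

text \<open>Tensor product: product graph; an A-move \<open>m\<close> performed while B sits at
\<open>y\<close> is \<open>Inl (m, y)\<close>, a B-move \<open>n\<close> performed while A sits at \<open>x\<close> is \<open>Inr (n, x)\<close>.\<close>

definition tensor :: "('va, 'ma) game \<Rightarrow> ('vb, 'mb) game \<Rightarrow>
    ('va \<times> 'vb, ('ma \<times> 'vb) + ('mb \<times> 'va)) game" where
  "tensor A B = \<lparr>
     verts = verts A \<times> verts B,
     moves = {Inl (m, y) | m y. m \<in> moves A \<and> y \<in> verts B} \<union>
             {Inr (n, x) | n x. n \<in> moves B \<and> x \<in> verts A},
     src = (\<lambda>e. case e of Inl (m, y) \<Rightarrow> (src A m, y) | Inr (n, x) \<Rightarrow> (x, src B n)),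
     tgt = (\<lambda>e. case e of Inl (m, y) \<Rightarrow> (tgt A m, y) | Inr (n, x) \<Rightarrow> (x, tgt B n)),
     root = (root A, root B),
     pol = (\<lambda>e. case e of Inl (m, y) \<Rightarrow> pol A m | Inr (n, x) \<Rightarrow> pol B n),
     kappa = (\<lambda>s. add2 (kappa A (projL s)) (kappa B (projR s))) \<rparr>"

definition two :: "(bool, unit) game" where
  "two = \<lparr> verts = UNIV, moves = {()}, src = (\<lambda>_. False), tgt = (\<lambda>_. True),
           root = False, pol = (\<lambda>_. -1), kappa = (\<lambda>_. (0, 0)) \<rparr>"

text \<open>The play \<open>o \<cdot> s\<close> of \<open>A\<^sup>* \<otimes> 2\<close> for a play \<open>s\<close> of A: first the move \<open>o\<close>
of 2 (with A at its root), then the moves of \<open>s\<close> (with 2 at its final vertex).\<close>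

definition o_then :: "('v, 'm) game \<Rightarrow> 'm list \<Rightarrow> (('m \<times> bool) + (unit \<times> 'v)) list" where
  "o_then A s = Inr ((), root A) # map (\<lambda>m. Inl (m, True)) s"

definition interaction :: "('v, 'm) game \<Rightarrow> 'm list set \<Rightarrow>
    (('m \<times> bool) + (unit \<times> 'v)) list set \<Rightarrow> 'm list set" where
  "interaction A \<sigma> \<tau> = {[]} \<union>
     {s @ [m] | s m. is_play A s \<and> s @ [m] \<in> \<sigma> \<and> o_then A s \<in> \<tau>}"

end

theory Submission
  imports Defs
begin

text \<open>A segment \<open>t\<close> of a play of a strategy that has even length and ends with a
Player move starts at an even position, because such plays alternate starting with Opponent.
Hence both the prefix before \<open>t\<close> and the prefix ending with \<open>t\<close> belong to the strategy,
so the strategy plays \<open>t\<close>, and winning gives the Player condition.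
Opponent's condition for the interaction \<open>s \<cdot> m\<close> is Player's condition in
\<open>A\<^sup>* \<otimes> 2\<close> for the play \<open>o \<cdot> s\<close> of \<open>\<tau>\<close>; the final move \<open>m\<close> is a Player move, so it
lies in no segment ending with an Opponent move.\<close>

lemma alternating_pol_nth:
  assumes "alternating A s" "s \<noteq> []" "pol A (hd s) = -1" "i < length s"
  shows "pol A (s ! i) = (if even i then -1 else 1)"
  using assms(4)
proof (induction i)
  case 0
  then show ?case using assms(2,3) by (simp add: hd_conv_nth)
next
  case (Suc i)
  then have "pol A (s ! Suc i) = - pol A (s ! i)"
    using assms(1) unfolding alternating_def by blast
  then show ?case using Suc by auto
qed

lemma chain_appendD:
  "chain A (p @ q) \<Longrightarrow> chain A p \<and> chain A q \<and> (p \<noteq> [] \<longrightarrow> q \<noteq> [] \<longrightarrow> tgt A (last p) = src A (hd q))"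
proof (induction p)
  case Nil
  then show ?case by simp
next
  case (Cons a p)
  then show ?case by (cases p; cases q) auto
qed

lemma is_path_prefix:
  assumes "is_path A r z (u @ w)" "w \<noteq> []" "src A (hd w) = x" "x \<in> verts A"
  shows "is_path A r x u"
proof (cases "u = []")
  case True
  then show ?thesis using assms unfolding is_path_def by auto
next
  case False
  then show ?thesis using assms chain_appendD[of A u w] unfolding is_path_def by auto
qed

lemma strategy_is_play: "strategy A \<sigma> \<Longrightarrow> s \<in> \<sigma> \<Longrightarrow> is_play A s"
  unfolding strategy_def by simp

lemma strategy_take_even:
  assumes "strategy A \<sigma>" "s \<in> \<sigma>" "even k"
  shows "take k s \<in> \<sigma>"
  using assms unfolding strategy_def by (cases "k \<le> length s") auto

lemma strategy_pol_nth:
  assumes "strategy A \<sigma>" "s \<in> \<sigma>" "i < length s"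
  shows "pol A (s ! i) = (if even i then -1 else 1)"
proof -
  have "s \<noteq> []" using assms(3) by auto
  moreover have "alternating A s" "pol A (hd s) = -1"
    using assms(1,2) \<open>s \<noteq> []\<close> unfolding strategy_def by auto
  ultimately show ?thesis using alternating_pol_nth assms(3) by blast
qed

lemma strategy_pol_last:
  assumes "strategy A \<sigma>" "s \<in> \<sigma>" "s \<noteq> []"
  shows "pol A (last s) = 1"
proof -
  have "even (length s)" using assms unfolding strategy_def by auto
  then show ?thesis
    using strategy_pol_nth[OF assms(1,2), of "length s - 1"] assms(3)
    by (simp add: last_conv_nth)
qed

lemma strategy_plays_segment:
  assumes str: "strategy A \<sigma>" and s: "u @ t @ v \<in> \<sigma>"
    and t: "is_path A x y t" "t \<noteq> []" "even (length t)" "pol A (last t) = 1"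
  shows "plays_path A \<sigma> t"
proof -
  define i where "i = length u + (length t - 1)"
  have i: "i < length (u @ t @ v)" using t(2) unfolding i_def by (cases t) auto
  have "(u @ t @ v) ! i = t ! (length t - 1)"
    using t(2) unfolding i_def nth_append_length_plus by (simp add: nth_append_left)
  also have "\<dots> = last t" using t(2) by (simp add: last_conv_nth)
  finally have "(u @ t @ v) ! i = last t" .
  then have "odd i"
    using strategy_pol_nth[OF str s i] t(4) by (auto split: if_splits)
  then have "even (length u)"
    using t(2,3) unfolding i_def by (cases t) auto
  then have u: "u \<in> \<sigma>" and ut: "u @ t \<in> \<sigma>"
    using strategy_take_even[OF str s, of "length u"]
      strategy_take_even[OF str s, of "length u + length t"] t(3) by auto
  have "is_play A (u @ t @ v)" using strategy_is_play[OF str s] .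
  then obtain z where uv: "is_path A (root A) z (u @ t @ v)" unfolding is_play_def ..
  have "src A (hd (t @ v)) = x" "x \<in> verts A"
    using t(1,2) unfolding is_path_def by auto
  then have "is_path A (root A) x u"
    using is_path_prefix[OF uv] t(2) by simp
  then show ?thesis unfolding plays_path_def using t(1) u ut by blast
qed

lemma wp_player_of_winning:
  assumes w: "winning A \<sigma>" and s: "s \<in> \<sigma>"
  shows "wp_player A s"
  unfolding wp_player_def
proof (intro allI impI)
  fix u t v x y
  assume "s = u @ t @ v" and t: "is_path A x y t" "even (length t)" "t \<noteq> []"
    "pol A (last t) = 1" and kp: "kappa_plus A t = 0"
  have "strategy A \<sigma>" using w unfolding winning_def by simp
  then have "plays_path A \<sigma> t"
    using strategy_plays_segment s t \<open>s = u @ t @ v\<close> by simp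
  then show "kappa_minus A t = 0" using w kp unfolding winning_def by simp
qed

abbreviation lift_dual_two :: "'m \<Rightarrow> ('m \<times> bool) + (unit \<times> 'v)" where
  "lift_dual_two m \<equiv> Inl (m, True)"

lemma projL_map_Inl: "projL (map (\<lambda>m. Inl (m, b)) t) = t"
  by (induction t) auto

lemma projR_map_Inl: "projR (map (\<lambda>m. Inl (m, b)) t) = []"
  by (induction t) auto

lemma kappa_tensor_dual_two_lift:
  "kappa (tensor (dual A) two) (map lift_dual_two t) = (kappa_minus A t, kappa_plus A t)"
  by (simp add: tensor_def dual_def two_def add2_def projL_map_Inl projR_map_Inl)

lemma chain_tensor_dual_two_lift:
  "chain A t \<Longrightarrow> chain (tensor (dual A) two) (map lift_dual_two t)"
  by (induction A t rule: chain.induct) (auto simp: tensor_def dual_def two_def)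

lemma is_path_tensor_dual_two_lift:
  "is_path A x y t \<Longrightarrow> is_path (tensor (dual A) two) (x, True) (y, True) (map lift_dual_two t)"
  using chain_tensor_dual_two_lift[of A t] unfolding is_path_def
  by (auto simp: tensor_def dual_def two_def hd_map last_map)

lemma wp_opponent_of_wp_player_o_then:
  assumes wp: "wp_player (tensor (dual A) two) (o_then A s)"
  shows "wp_opponent A s"
  unfolding wp_opponent_def
proof (intro allI impI)
  fix u t v x y
  assume s: "s = u @ t @ v" and t: "is_path A x y t" "even (length t)" "t \<noteq> []"
    "pol A (last t) = -1" and km: "kappa_minus A t = 0"
  let ?T = "tensor (dual A) two" and ?t = "map lift_dual_two t"
  have split: "o_then A s = (Inr ((), root A) # map lift_dual_two u) @ ?t @ map lift_dual_two v"
    unfolding o_then_def s by simp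
  have ev: "even (length ?t)" and ne: "?t \<noteq> []" using t(2,3) by auto
  have last: "pol ?T (last ?t) = 1"
    using t(3,4) by (simp add: last_map tensor_def dual_def)
  have "kappa_minus ?T ?t = 0" if "kappa_plus ?T ?t = 0"
    using wp[unfolded wp_player_def, rule_format,
        OF split is_path_tensor_dual_two_lift[OF t(1)] ev ne last that] .
  then show "kappa_plus A t = 0" using km by (simp add: kappa_tensor_dual_two_lift)
qed

lemma wp_opponent_snoc_player:
  assumes wp: "wp_opponent A s" and m: "pol A m = 1"
  shows "wp_opponent A (s @ [m])"
  unfolding wp_opponent_def
proof (intro allI impI)
  fix u t v x y
  assume st: "s @ [m] = u @ t @ v" and t: "is_path A x y t" "even (length t)" "t \<noteq> []"
    "pol A (last t) = -1" "kappa_minus A t = 0"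
  have "v \<noteq> []"
  proof
    assume "v = []"
    then have "last (s @ [m]) = last (u @ t)" using st by simp
    then have "m = last t" using t(3) by simp
    then show False using t(4) m by simp
  qed
  have "s = butlast (s @ [m])" by simp
  also have "\<dots> = u @ t @ butlast v" using st \<open>v \<noteq> []\<close> by (simp add: butlast_append)
  finally show "kappa_plus A t = 0"
    using wp[unfolded wp_opponent_def, rule_format, OF _ t] by blast
qed

theorem mainTheorem4:
  fixes A :: "('v, 'm) game"
  assumes "payoff_game A"
  shows "(\<forall>\<sigma>. winning A \<sigma> \<longrightarrow> (\<forall>s\<in>\<sigma>. wp_player A s))
       \<and> (\<forall>\<sigma> \<tau>. winning A \<sigma> \<longrightarrow> winning (tensor (dual A) two) \<tau> \<longrightarrow>
            (\<forall>s\<in>interaction A \<sigma> \<tau>. well_parenthesized A s))"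
proof (intro conjI allI impI ballI)
  fix \<sigma> s assume "winning A \<sigma>" "s \<in> \<sigma>"
  then show "wp_player A s" by (rule wp_player_of_winning)
next
  fix \<sigma> \<tau> s'
  assume \<sigma>: "winning A \<sigma>" and \<tau>: "winning (tensor (dual A) two) \<tau>"
    and s': "s' \<in> interaction A \<sigma> \<tau>"
  show "well_parenthesized A s'"
  proof (cases "s' = []")
    case True
    then show ?thesis unfolding well_parenthesized_def wp_player_def wp_opponent_def by simp
  next
    case False
    then obtain s m where sm: "s' = s @ [m]" "s @ [m] \<in> \<sigma>" "o_then A s \<in> \<tau>"
      using s' unfolding interaction_def by blast
    have "pol A m = 1"
      using strategy_pol_last[of A \<sigma> "s @ [m]"] \<sigma> sm unfolding winning_def by simp
    moreover have "wp_opponent A s"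
      using wp_player_of_winning[OF \<tau> sm(3)] by (rule wp_opponent_of_wp_player_o_then)
    ultimately have "wp_opponent A s'"
      using sm(1) wp_opponent_snoc_player by simp
    then show ?thesis
      using wp_player_of_winning[OF \<sigma> sm(2)] sm(1) unfolding well_parenthesized_def by simp
  qed
qed

end
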